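(* Let $X$ be a quandle, let $s=(x_1,\dots,x_n)\in X^n$, and let $1\le\alpha<\beta\le n$ with $x_\alpha=x_\beta$. Then the image in $S_n$ of the stabilizer of $s$ in $B_n$ contains the transposition $(\alpha\ \beta)$.
   Context: A quandle is a set $X$ with an operation $x^y$ such that $x\mapsto x^y$ is bijective for each $y$, $(z^x)^y=(z^y)^{x^y}$, and $x^x=x$. $B_n$ acts on $X^n$ from the right by $(\dots,x_i,x_{i+1},\dots)^{\sigma_i}=(\dots,x_{i+1},x_i^{x_{i+1}},\dots)$, and $B_n\to S_n$ sends $\sigma_i\mapsto(i\ i+1)$. *)

theory Defs
  imports Main "HOL-Combinatorics.Transposition"
begin

text \<open>A quandle structure on the type 'a, with q x y standing for x^y.\<close>
definition quandle :: "('a \<Rightarrow> 'a \<Rightarrow> 'a) \<Rightarrow> bool" where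
  "quandle q \<longleftrightarrow>
     (\<forall>y. bij (\<lambda>x. q x y)) \<and>
     (\<forall>x y z. q (q z x) y = q (q z y) (q x y)) \<and>
     (\<forall>x. q x x = x)"

text \<open>Braid words: a letter (i, True) is sigma_i, (i, False) is sigma_i inverse.
  Positions are 1-based; a word is a braid word in B_n if all indices satisfy 1 <= i < n.\<close>
definition braid_word :: "nat \<Rightarrow> (nat \<times> bool) list \<Rightarrow> bool" where
  "braid_word n w \<longleftrightarrow> (\<forall>(i, e) \<in> set w. 1 \<le> i \<and> i < n)"

text \<open>Right action of a generator on tuples (lists, 1-based position i is list index i-1).\<close>
fun gen_act :: "('a \<Rightarrow> 'a \<Rightarrow> 'a) \<Rightarrow> nat \<times> bool \<Rightarrow> 'a list \<Rightarrow> 'a list" where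
  "gen_act q (i, True) s = s[i - 1 := s ! i, i := q (s ! (i - 1)) (s ! i)]"
| "gen_act q (i, False) s = s[i - 1 := inv (\<lambda>x. q x (s ! (i - 1))) (s ! i), i := s ! (i - 1)]"

definition braid_act :: "('a \<Rightarrow> 'a \<Rightarrow> 'a) \<Rightarrow> (nat \<times> bool) list \<Rightarrow> 'a list \<Rightarrow> 'a list" where
  "braid_act q w s = fold (gen_act q) w s"

text \<open>Image in S_n (permutations of {1..n}, identity elsewhere): sigma_i maps to (i i+1).\<close>
definition braid_perm :: "(nat \<times> bool) list \<Rightarrow> nat \<Rightarrow> nat" where
  "braid_perm w = foldr (\<lambda>(i, e) p. p \<circ> transpose i (i + 1)) w id"

end

theory Submission
  imports Defs
begin

text \<open>Let \<open>u = \<sigma>\<^sub>\<beta>\<^sub>-\<^sub>1 \<cdots> \<sigma>\<^sub>\<alpha>\<^sub>+\<^sub>1\<close>. Acting by \<open>u\<close> drags the entry \<open>x\<^sub>\<beta>\<close> leftwards to position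
  \<open>\<alpha> + 1\<close> without touching positions \<open>1, \<dots>, \<alpha>\<close>, so afterwards positions \<open>\<alpha>\<close> and \<open>\<alpha> + 1\<close>
  both carry \<open>x\<^sub>\<alpha> = x\<^sub>\<beta>\<close>; by idempotency \<open>\<sigma>\<^sub>\<alpha>\<close> fixes that tuple. Hence the conjugate
  \<open>u \<sigma>\<^sub>\<alpha> u\<^sup>-\<^sup>1\<close> stabilises \<open>s\<close>, and its permutation is the conjugate of \<open>(\<alpha> \<alpha>+1)\<close> by the
  cycle of \<open>u\<close>, which is \<open>(\<alpha> \<beta>)\<close>.\<close>

definition inverse_word :: "(nat \<times> bool) list \<Rightarrow> (nat \<times> bool) list" where
  "inverse_word w = rev (map (\<lambda>(i, e). (i, \<not> e)) w)"

definition pull_word :: "nat \<Rightarrow> nat \<Rightarrow> (nat \<times> bool) list" where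
  "pull_word m b = map (\<lambda>k. (k, True)) (rev [m..<b])"

lemma pull_word_Suc: "m \<le> c \<Longrightarrow> pull_word m (Suc c) = (c, True) # pull_word m c"
  by (simp add: pull_word_def)

lemma braid_word_pull_word: "1 \<le> m \<Longrightarrow> b \<le> n \<Longrightarrow> braid_word n (pull_word m b)"
  by (auto simp: braid_word_def pull_word_def)

lemma inverse_word_Cons: "inverse_word ((i, e) # w) = inverse_word w @ [(i, \<not> e)]"
  by (simp add: inverse_word_def)

lemma braid_word_Cons [simp]:
  "braid_word n ((i, e) # w) \<longleftrightarrow> 1 \<le> i \<and> i < n \<and> braid_word n w"
  by (simp add: braid_word_def)

lemma braid_word_append [simp]:
  "braid_word n (v @ w) \<longleftrightarrow> braid_word n v \<and> braid_word n w"
  by (auto simp: braid_word_def)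

lemma braid_word_inverse_word [simp]: "braid_word n (inverse_word w) \<longleftrightarrow> braid_word n w"
  by (auto simp: braid_word_def inverse_word_def)

lemma quandle_inv_right:
  assumes "quandle q"
  shows "inv (\<lambda>x. q x y) (q z y) = z" and "q (inv (\<lambda>x. q x y) z) y = z"
proof -
  have bij: "bij (\<lambda>x. q x y)" using assms unfolding quandle_def by blast
  show "inv (\<lambda>x. q x y) (q z y) = z" using inv_f_f[OF bij_is_inj[OF bij]] by simp
  show "q (inv (\<lambda>x. q x y) z) y = z" using surj_f_inv_f[OF bij_is_surj[OF bij]] by simp
qed

lemma length_gen_act [simp]: "length (gen_act q g s) = length s"
  by (cases g; cases "snd g") auto

lemma length_braid_act [simp]: "length (braid_act q w s) = length s"
  by (induction w arbitrary: s) (auto simp: braid_act_def)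

lemma braid_act_Nil [simp]: "braid_act q [] s = s"
  by (simp add: braid_act_def)

lemma braid_act_Cons: "braid_act q (g # w) s = braid_act q w (gen_act q g s)"
  by (simp add: braid_act_def)

lemma braid_act_append: "braid_act q (v @ w) s = braid_act q w (braid_act q v s)"
  by (simp add: braid_act_def)

lemma gen_act_inverse:
  assumes "quandle q" and "1 \<le> i" and "i < length s"
  shows "gen_act q (i, \<not> e) (gen_act q (i, e) s) = s"
  using assms by (cases e) (auto simp: nth_list_update quandle_inv_right intro!: nth_equalityI)

lemma braid_act_inverse_word:
  assumes "quandle q" and "braid_word (length s) w"
  shows "braid_act q (inverse_word w) (braid_act q w s) = s"
  using assms(2)
proof (induction w arbitrary: s)
  case Nil
  then show ?case by (simp add: inverse_word_def)
next
  case (Cons g w)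
  obtain i e where g: "g = (i, e)" by force
  have "1 \<le> i" and "i < length s" and "braid_word (length (gen_act q g s)) w"
    using Cons.prems by (simp_all add: g)
  then show ?case
    using Cons.IH gen_act_inverse[OF assms(1)]
    by (simp add: g braid_act_Cons braid_act_append inverse_word_Cons)
qed

lemma braid_act_conjugate_fixed:
  assumes "quandle q" and "braid_word (length s) u"
    and "gen_act q g (braid_act q u s) = braid_act q u s"
  shows "braid_act q (u @ [g] @ inverse_word u) s = s"
  using assms by (simp add: braid_act_append braid_act_Cons braid_act_inverse_word)

lemma gen_act_fixed_if_equal:
  assumes "quandle q" and "i < length s" and "s ! (i - 1) = s ! i"
  shows "gen_act q (i, True) s = s"
proof -
  have "q x x = x" for x using assms(1) unfolding quandle_def by blast
  then show ?thesis using assms(2,3) by (auto simp: nth_list_update intro!: nth_equalityI)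
qed

lemma braid_act_pull_word:
  assumes "1 \<le> m" and "m \<le> b" and "b \<le> length s"
  shows "braid_act q (pull_word m b) s ! (m - 1) = s ! (b - 1)
    \<and> take (m - 1) (braid_act q (pull_word m b) s) = take (m - 1) s"
  using assms(2,3)
proof (induction b arbitrary: s rule: dec_induct)
  case base
  then show ?case by (simp add: pull_word_def)
next
  case (step c)
  define t where "t = gen_act q (c, True) s"
  have "length t = length s" and "t ! (c - 1) = s ! c" and "take (m - 1) t = take (m - 1) s"
    using assms(1) step by (simp_all add: t_def nth_list_update take_update_cancel)
  moreover have "braid_act q (pull_word m (Suc c)) s = braid_act q (pull_word m c) t"
    using step.hyps by (simp add: pull_word_Suc braid_act_Cons t_def)
  ultimately show ?case
    using step.IH[of t] step.prems by simp
qed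

lemma braid_perm_Nil [simp]: "braid_perm [] = id"
  by (simp add: braid_perm_def)

lemma braid_perm_Cons [simp]: "braid_perm ((i, e) # w) = braid_perm w \<circ> transpose i (i + 1)"
  by (simp add: braid_perm_def)

lemma braid_perm_append: "braid_perm (v @ w) = braid_perm w \<circ> braid_perm v"
  by (induction v) (auto simp: braid_perm_def comp_assoc split: prod.splits)

lemma braid_perm_pull_conjugate:
  assumes "a < b"
  shows "braid_perm (pull_word (Suc a) b @ [(a, True)] @ inverse_word (pull_word (Suc a) b))
    = transpose a b"
  using Suc_leI[OF assms]
proof (induction b rule: dec_induct)
  case base
  then show ?case by (simp add: pull_word_def inverse_word_def)
next
  case (step c)
  have "braid_perm (pull_word (Suc a) (Suc c) @ [(a, True)] @ inverse_word (pull_word (Suc a) (Suc c)))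
     = transpose c (Suc c)
       \<circ> braid_perm (pull_word (Suc a) c @ [(a, True)] @ inverse_word (pull_word (Suc a) c))
       \<circ> transpose c (Suc c)"
    using step by (simp add: pull_word_Suc inverse_word_Cons braid_perm_append comp_assoc)
  also have "\<dots> = transpose (Suc c) c \<circ> transpose c a \<circ> transpose (Suc c) c"
    using step by (simp add: transpose_commute)
  also have "\<dots> = transpose a (Suc c)"
    using step by (subst transpose_comp_triple) (auto simp: transpose_commute)
  finally show ?case .
qed

theorem lemma4p34:
  fixes q :: "'a \<Rightarrow> 'a \<Rightarrow> 'a" and s :: "'a list" and \<alpha> \<beta> :: nat
  assumes "quandle q"
    and "1 \<le> \<alpha>" and "\<alpha> < \<beta>" and "\<beta> \<le> length s"
    and "s ! (\<alpha> - 1) = s ! (\<beta> - 1)"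
  shows "\<exists>w. braid_word (length s) w \<and> braid_act q w s = s \<and> braid_perm w = transpose \<alpha> \<beta>"
proof (intro exI conjI)
  define u where "u = pull_word (Suc \<alpha>) \<beta>"
  have u_word: "braid_word (length s) u"
    using assms by (simp add: u_def braid_word_pull_word)
  have pulled: "braid_act q u s ! \<alpha> = s ! (\<beta> - 1)"
    and prefix: "take \<alpha> (braid_act q u s) = take \<alpha> s"
    using braid_act_pull_word[where m = "Suc \<alpha>" and b = \<beta> and s = s and q = q] assms
    by (simp_all add: u_def)
  have "braid_act q u s ! (\<alpha> - 1) = s ! (\<alpha> - 1)"
    using nth_take[of "\<alpha> - 1" \<alpha>] prefix assms(2) by (metis diff_less zero_less_one less_le_trans)
  then have "braid_act q u s ! (\<alpha> - 1) = braid_act q u s ! \<alpha>"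
    using pulled assms(5) by simp
  then have "gen_act q (\<alpha>, True) (braid_act q u s) = braid_act q u s"
    using assms by (intro gen_act_fixed_if_equal) auto
  then show "braid_act q (u @ [(\<alpha>, True)] @ inverse_word u) s = s"
    using braid_act_conjugate_fixed[OF assms(1) u_word] by blast
  show "braid_word (length s) (u @ [(\<alpha>, True)] @ inverse_word u)"
    using u_word assms by simp
  show "braid_perm (u @ [(\<alpha>, True)] @ inverse_word u) = transpose \<alpha> \<beta>"
    using braid_perm_pull_conjugate[OF assms(3)] by (simp add: u_def)
qed

end
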